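(* In $(\lambda^2\beta\eta\pi* )'$: (1) for every type $\psi$, the set $\mathcal{SN}^\psi$ of SN terms of type $\psi$ is an RC of type $\psi$; (2) if $\mathcal{R}_i$ is an RC of type $\varphi_i$ for $i=1,2$, then $\mathcal{R}_1\times\mathcal{R}_2$ is an RC of type $\varphi_1\times\varphi_2$ and $\mathcal{R}_1\to\mathcal{R}_2$ is an RC of type $\varphi_1\to\varphi_2$.
   Context: System $(\lambda^2\beta\eta\pi* )'$. Types are generated from type variables $X,Y,\ldots$ and a type constant $\top$ by $\varphi\times\psi$, $\varphi\to\psi$ and $\forall X.\varphi$. Terms are Church-style typed: the constant $*^\top$, variables $x^\varphi$, $\lambda x^\varphi.t$, application $uv$, pairs $\langle u,v\rangle$, projections $\pi_1t,\pi_2t$, universal abstraction $(\Lambda X.v^\varphi)^{\forall X.\varphi}$ (allowed only when $X$ is not free in the type of any free variable of $v$), and universal application $(t^{\forall X.\varphi}\psi)^{\varphi[X:=\psi]}$. Terms are identified up to renaming of bound variables ($\equiv$); $\mathrm{FV}$, $\mathrm{FTV}$ denote free term / type variables. $\mathit{Iso}(\top)$ is the least set of types with $\top\in\mathit{Iso}(\top)$, $\varphi\to\tau$, $\forall X.\tau\in\mathit{Iso}(\top)$ if $\tau\in\mathit{Iso}(\top)$, $\tau_1\times\tau_2\in\mathit{Iso}(\top)$ if $\tau_1,\tau_2\in\mathit{Iso}(\top)$. For $\tau\in\mathit{Iso}(\top)$: $*^\top$ is the constant, $*^{\varphi\to\tau}:=\lambda x^\varphi.*^\tau$, $*^{\tau_1\times\tau_2}:=\langle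 *^{\tau_1},*^{\tau_2}\rangle$, $*^{\forall X.\tau}:=\Lambda X.*^\tau$. The one-step relation $\to$ is the closure under all contexts of: $(\beta)$ $(\lambda x.u)v\to u[x:=v]$; $\pi_1\langle u,v\rangle\to u$, $\pi_2\langle u,v\rangle\to v$; $(\eta)$ $\lambda x.tx\to t$ ($x\notin\mathrm{FV}(t)$); $(SP)$ $\langle\pi_1u,\pi_2u\rangle\to u$; (gentop) $u^\tau\to *^\tau$ ($\tau\in\mathit{Iso}(\top)$, $u\not\equiv *^\tau$); $(\eta_{top})$ $\lambda x^\tau.t\,*^\tau\to t$ ($x\notin\mathrm{FV}(t)$, $\tau\in\mathit{Iso}(\top)$); $\langle\pi_1u,*^\tau\rangle\to u$ ($u:\varphi\times\tau$, $\tau\in\mathit{Iso}(\top)$); $\langle *^\tau,\pi_2u\rangle\to u$ ($u:\tau\times\psi$, $\tau\in\mathit{Iso}(\top)$); $(\beta^2)$ $(\Lambda X.t)\varphi\to t[X:=\varphi]$; $(\eta^2)$ $\Lambda X.sX\to s$ ($X\notin\mathrm{FTV}(s)$). A term is SN if no infinite $\to$-sequence starts from it; $\mathcal{SN}^\psi$ is the set of SN terms of type $\psi$. A term is neutral if it is not of the form $\langle u,v\rangle$, $\lambda x.v$ or $\Lambda X.u$. For a term $t$ and a variable $z^\top$, $t[*^\top:=z^\top]$ replaces every occurrence of the constant $*^\top$ in $t$ by $z^\top$; a set $A$ of terms is variant-closed if $t[*^\top:=z^\top]\in A$ for every $t\in A$ and every variable $z^\top$ not occurring in $t$. A reducibility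 candidate (RC) of type $\varphi$ is a set $\mathcal{R}$ of terms of type $\varphi$ such that: (CR0) if $\varphi\in\mathit{Iso}(\top)$ then $*^\varphi\in\mathcal{R}$, and $\mathcal{R}$ is variant-closed; (CR1) every $t\in\mathcal{R}$ is SN; (CR2) $t\in\mathcal{R}$, $t\to t'$ imply $t'\in\mathcal{R}$; (CR3) if $t$ of type $\varphi$ is neutral and every one-step reduct of $t$ is in $\mathcal{R}$, then $t\in\mathcal{R}$. For RCs $\mathcal{R}_i$ of type $\varphi_i$: $\mathcal{R}_1\times\mathcal{R}_2=\{t^{\varphi_1\times\varphi_2}\mid \pi_it\in\mathcal{R}_i, i=1,2\}$ and $\mathcal{R}_1\to\mathcal{R}_2=\{t^{\varphi_1\to\varphi_2}\mid \forall u\in\mathcal{R}_1,\ tu\in\mathcal{R}_2\}$. *)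

theory Defs
  imports Main
begin

text \<open>Representation: type variables bound by
  a universal quantifier are de Bruijn indices (TBnd), free type variables are named
  (TFree).  Term variables bound by lambda are de Bruijn indices (BVar); free term
  variables are named and Church-style annotated with their type (FVar x T), so
  x^A and x^B are different variables.  Universal abstraction TLam binds type
  index 0 in the annotations of its body.  Terms are thereby identified up to
  renaming of bound (term and type) variables, and the side condition on
  universal abstraction is built into the representation.\<close>

datatype ty = TFree nat | TBnd nat | Top | Prod ty ty | Arr ty ty | All ty

fun wfty :: "nat \<Rightarrow> ty \<Rightarrow> bool" where
  "wfty n (TFree X) = True"
| "wfty n (TBnd i) = (i < n)"
| "wfty n Top = True"
| "wfty n (Prod A B) = (wfty n A \<and> wfty n B)"
| "wfty n (Arr A B) = (wfty n A \<and> wfty n B)"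
| "wfty n (All A) = wfty (Suc n) A"

definition is_type :: "ty \<Rightarrow> bool" where
  "is_type T \<longleftrightarrow> wfty 0 T"

fun tshift :: "nat \<Rightarrow> ty \<Rightarrow> ty" where
  "tshift k (TFree X) = TFree X"
| "tshift k (TBnd i) = (if i < k then TBnd i else TBnd (Suc i))"
| "tshift k Top = Top"
| "tshift k (Prod A B) = Prod (tshift k A) (tshift k B)"
| "tshift k (Arr A B) = Arr (tshift k A) (tshift k B)"
| "tshift k (All A) = All (tshift (Suc k) A)"

fun tsubst :: "nat \<Rightarrow> ty \<Rightarrow> ty \<Rightarrow> ty" where
  "tsubst k A (TFree X) = TFree X"
| "tsubst k A (TBnd i) = (if i < k then TBnd i else if i = k then A else TBnd (i - 1))"
| "tsubst k A Top = Top"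
| "tsubst k A (Prod B C) = Prod (tsubst k A B) (tsubst k A C)"
| "tsubst k A (Arr B C) = Arr (tsubst k A B) (tsubst k A C)"
| "tsubst k A (All B) = All (tsubst (Suc k) (tshift 0 A) B)"

datatype trm =
    Star
  | FVar nat ty
  | BVar nat
  | Lam ty trm
  | App trm trm
  | Pair trm trm
  | Pi1 trm
  | Pi2 trm
  | TLam trm
  | TApp trm ty

text \<open>Shifting / substituting type indices inside terms (free variables carry
  closed annotations and are left untouched).\<close>
fun ttshift :: "nat \<Rightarrow> trm \<Rightarrow> trm" where
  "ttshift k Star = Star"
| "ttshift k (FVar x T) = FVar x T"
| "ttshift k (BVar i) = BVar i"
| "ttshift k (Lam A b) = Lam (tshift k A) (ttshift k b)"
| "ttshift k (App u v) = App (ttshift k u) (ttshift k v)"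
| "ttshift k (Pair u v) = Pair (ttshift k u) (ttshift k v)"
| "ttshift k (Pi1 u) = Pi1 (ttshift k u)"
| "ttshift k (Pi2 u) = Pi2 (ttshift k u)"
| "ttshift k (TLam b) = TLam (ttshift (Suc k) b)"
| "ttshift k (TApp u A) = TApp (ttshift k u) (tshift k A)"

fun ttsubst :: "nat \<Rightarrow> ty \<Rightarrow> trm \<Rightarrow> trm" where
  "ttsubst k A Star = Star"
| "ttsubst k A (FVar x T) = FVar x T"
| "ttsubst k A (BVar i) = BVar i"
| "ttsubst k A (Lam B b) = Lam (tsubst k A B) (ttsubst k A b)"
| "ttsubst k A (App u v) = App (ttsubst k A u) (ttsubst k A v)"
| "ttsubst k A (Pair u v) = Pair (ttsubst k A u) (ttsubst k A v)"
| "ttsubst k A (Pi1 u) = Pi1 (ttsubst k A u)"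
| "ttsubst k A (Pi2 u) = Pi2 (ttsubst k A u)"
| "ttsubst k A (TLam b) = TLam (ttsubst (Suc k) (tshift 0 A) b)"
| "ttsubst k A (TApp u B) = TApp (ttsubst k A u) (tsubst k A B)"

fun lift :: "nat \<Rightarrow> trm \<Rightarrow> trm" where
  "lift k Star = Star"
| "lift k (FVar x T) = FVar x T"
| "lift k (BVar i) = (if i < k then BVar i else BVar (Suc i))"
| "lift k (Lam A b) = Lam A (lift (Suc k) b)"
| "lift k (App u v) = App (lift k u) (lift k v)"
| "lift k (Pair u v) = Pair (lift k u) (lift k v)"
| "lift k (Pi1 u) = Pi1 (lift k u)"
| "lift k (Pi2 u) = Pi2 (lift k u)"
| "lift k (TLam b) = TLam (lift k b)"
| "lift k (TApp u A) = TApp (lift k u) A"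

fun subst :: "nat \<Rightarrow> trm \<Rightarrow> trm \<Rightarrow> trm" where
  "subst k s Star = Star"
| "subst k s (FVar x T) = FVar x T"
| "subst k s (BVar i) = (if i < k then BVar i else if i = k then s else BVar (i - 1))"
| "subst k s (Lam A b) = Lam A (subst (Suc k) (lift 0 s) b)"
| "subst k s (App u v) = App (subst k s u) (subst k s v)"
| "subst k s (Pair u v) = Pair (subst k s u) (subst k s v)"
| "subst k s (Pi1 u) = Pi1 (subst k s u)"
| "subst k s (Pi2 u) = Pi2 (subst k s u)"
| "subst k s (TLam b) = TLam (subst k (ttshift 0 s) b)"
| "subst k s (TApp u A) = TApp (subst k s u) A"

text \<open>Church-style typing: n = number of enclosing universal abstractions,
  G = types of the enclosing lambda-bound variables.\<close>
inductive typing :: "nat \<Rightarrow> ty list \<Rightarrow> trm \<Rightarrow> ty \<Rightarrow> bool" where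
  T_Star: "typing n G Star Top"
| T_FVar: "wfty 0 T \<Longrightarrow> typing n G (FVar x T) T"
| T_BVar: "i < length G \<Longrightarrow> typing n G (BVar i) (G ! i)"
| T_Lam: "wfty n A \<Longrightarrow> typing n (A # G) b B \<Longrightarrow> typing n G (Lam A b) (Arr A B)"
| T_App: "typing n G u (Arr A B) \<Longrightarrow> typing n G v A \<Longrightarrow> typing n G (App u v) B"
| T_Pair: "typing n G u A \<Longrightarrow> typing n G v B \<Longrightarrow> typing n G (Pair u v) (Prod A B)"
| T_Pi1: "typing n G u (Prod A B) \<Longrightarrow> typing n G (Pi1 u) A"
| T_Pi2: "typing n G u (Prod A B) \<Longrightarrow> typing n G (Pi2 u) B"
| T_TLam: "typing (Suc n) (map (tshift 0) G) b B \<Longrightarrow> typing n G (TLam b) (All B)"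
| T_TApp: "typing n G u (All B) \<Longrightarrow> wfty n A \<Longrightarrow> typing n G (TApp u A) (tsubst 0 A B)"

text \<open>A (closed-context) term of type T: free variables are the named FVars.\<close>
definition has_type :: "trm \<Rightarrow> ty \<Rightarrow> bool" where
  "has_type t T \<longleftrightarrow> typing 0 [] t T"

inductive iso :: "ty \<Rightarrow> bool" where
  iso_Top: "iso Top"
| iso_Arr: "iso T \<Longrightarrow> iso (Arr A T)"
| iso_All: "iso T \<Longrightarrow> iso (All T)"
| iso_Prod: "iso A \<Longrightarrow> iso B \<Longrightarrow> iso (Prod A B)"

text \<open>The canonical inhabitant *^T (only meaningful for iso T).\<close>
fun star :: "ty \<Rightarrow> trm" where
  "star Top = Star"
| "star (Arr A T) = Lam A (star T)"
| "star (Prod A B) = Pair (star A) (star B)"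
| "star (All T) = TLam (star T)"
| "star (TFree X) = Star"
| "star (TBnd i) = Star"

inductive red :: "nat \<Rightarrow> ty list \<Rightarrow> trm \<Rightarrow> trm \<Rightarrow> bool" where
  r_beta: "red n G (App (Lam A u) v) (subst 0 v u)"
| r_proj1: "red n G (Pi1 (Pair u v)) u"
| r_proj2: "red n G (Pi2 (Pair u v)) v"
| r_eta: "red n G (Lam A (App (lift 0 t) (BVar 0))) t"
| r_SP: "red n G (Pair (Pi1 u) (Pi2 u)) u"
| r_gentop: "typing n G u T \<Longrightarrow> iso T \<Longrightarrow> u \<noteq> star T \<Longrightarrow> red n G u (star T)"
| r_eta_top: "iso A \<Longrightarrow> red n G (Lam A (App (lift 0 t) (star A))) t"
| r_pair_top1: "typing n G u (Prod A T) \<Longrightarrow> iso T \<Longrightarrow> red n G (Pair (Pi1 u) (star T)) u"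
| r_pair_top2: "typing n G u (Prod T B) \<Longrightarrow> iso T \<Longrightarrow> red n G (Pair (star T) (Pi2 u)) u"
| r_beta2: "red n G (TApp (TLam t) A) (ttsubst 0 A t)"
| r_eta2: "red n G (TLam (TApp (ttshift 0 s) (TBnd 0))) s"
| c_Lam: "red n (A # G) b b' \<Longrightarrow> red n G (Lam A b) (Lam A b')"
| c_AppL: "red n G u u' \<Longrightarrow> red n G (App u v) (App u' v)"
| c_AppR: "red n G v v' \<Longrightarrow> red n G (App u v) (App u v')"
| c_PairL: "red n G u u' \<Longrightarrow> red n G (Pair u v) (Pair u' v)"
| c_PairR: "red n G v v' \<Longrightarrow> red n G (Pair u v) (Pair u v')"
| c_Pi1: "red n G u u' \<Longrightarrow> red n G (Pi1 u) (Pi1 u')"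
| c_Pi2: "red n G u u' \<Longrightarrow> red n G (Pi2 u) (Pi2 u')"
| c_TLam: "red (Suc n) (map (tshift 0) G) b b' \<Longrightarrow> red n G (TLam b) (TLam b')"
| c_TApp: "red n G u u' \<Longrightarrow> red n G (TApp u A) (TApp u' A)"

definition step :: "trm \<Rightarrow> trm \<Rightarrow> bool" where
  "step t t' \<longleftrightarrow> red 0 [] t t'"

definition SN :: "trm \<Rightarrow> bool" where
  "SN t \<longleftrightarrow> \<not> (\<exists>f. f 0 = t \<and> (\<forall>i. step (f i) (f (Suc i))))"

definition SNset :: "ty \<Rightarrow> trm set" where
  "SNset T = {t. has_type t T \<and> SN t}"

definition neutral :: "trm \<Rightarrow> bool" where
  "neutral t \<longleftrightarrow> (\<forall>u v. t \<noteq> Pair u v) \<and> (\<forall>A b. t \<noteq> Lam A b) \<and> (\<forall>b. t \<noteq> TLam b)"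

fun fvs :: "trm \<Rightarrow> (nat \<times> ty) set" where
  "fvs Star = {}"
| "fvs (FVar x T) = {(x, T)}"
| "fvs (BVar i) = {}"
| "fvs (Lam A b) = fvs b"
| "fvs (App u v) = fvs u \<union> fvs v"
| "fvs (Pair u v) = fvs u \<union> fvs v"
| "fvs (Pi1 u) = fvs u"
| "fvs (Pi2 u) = fvs u"
| "fvs (TLam b) = fvs b"
| "fvs (TApp u A) = fvs u"

fun repl_star :: "nat \<Rightarrow> trm \<Rightarrow> trm" where
  "repl_star z Star = FVar z Top"
| "repl_star z (FVar x T) = FVar x T"
| "repl_star z (BVar i) = BVar i"
| "repl_star z (Lam A b) = Lam A (repl_star z b)"
| "repl_star z (App u v) = App (repl_star z u) (repl_star z v)"
| "repl_star z (Pair u v) = Pair (repl_star z u) (repl_star z v)"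
| "repl_star z (Pi1 u) = Pi1 (repl_star z u)"
| "repl_star z (Pi2 u) = Pi2 (repl_star z u)"
| "repl_star z (TLam b) = TLam (repl_star z b)"
| "repl_star z (TApp u A) = TApp (repl_star z u) A"

definition variant_closed :: "trm set \<Rightarrow> bool" where
  "variant_closed R \<longleftrightarrow> (\<forall>t \<in> R. \<forall>z. (z, Top) \<notin> fvs t \<longrightarrow> repl_star z t \<in> R)"

definition RC :: "ty \<Rightarrow> trm set \<Rightarrow> bool" where
  "RC T R \<longleftrightarrow>
     (\<forall>t \<in> R. has_type t T) \<and>
     ((iso T \<longrightarrow> star T \<in> R) \<and> variant_closed R) \<and>
     (\<forall>t \<in> R. SN t) \<and>
     (\<forall>t t'. t \<in> R \<longrightarrow> step t t' \<longrightarrow> t' \<in> R) \<and>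
     (\<forall>t. has_type t T \<longrightarrow> neutral t \<longrightarrow> (\<forall>t'. step t t' \<longrightarrow> t' \<in> R) \<longrightarrow> t \<in> R)"

definition RC_prod :: "ty \<Rightarrow> ty \<Rightarrow> trm set \<Rightarrow> trm set \<Rightarrow> trm set" where
  "RC_prod A B R1 R2 = {t. has_type t (Prod A B) \<and> Pi1 t \<in> R1 \<and> Pi2 t \<in> R2}"

definition RC_arr :: "ty \<Rightarrow> ty \<Rightarrow> trm set \<Rightarrow> trm set \<Rightarrow> trm set" where
  "RC_arr A B R1 R2 = {t. has_type t (Arr A B) \<and> (\<forall>u \<in> R1. App t u \<in> R2)}"

end

theory Submission
  imports Defs
begin

text \<open>Types are unique and preserved by
  reduction, so a gentop step from a term of type \<open>\<tau>\<close> always yields \<open>*\<^sup>\<tau>\<close>, which lies in every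
  candidate of type \<open>\<tau>\<close>, and the terms \<open>*\<^sup>\<tau>\<close> are normal. For \<open>\<R>\<^sub>1 \<rightarrow> \<R>\<^sub>2\<close>, condition (CR3)
  and membership of \<open>*\<close> at arrow types are proved by induction on the strong normalisation of the argument
  \<open>u\<close>: apart from \<open>*\<^sup>\<tau>\<close>, the reducts of \<open>t u\<close> are \<open>t' u\<close>, \<open>t u'\<close> and, for \<open>t = \<lambda>x.b\<close>, \<open>b[x:=u]\<close>;
  products are analogous with projections. For variant-closedness, turning \<open>z\<^sup>\<top>\<close> back into
  \<open>*\<^sup>\<top>\<close> simulates every reduction step except the gentop steps \<open>z\<^sup>\<top> \<rightarrow> *\<^sup>\<top>\<close>, which decrease the
  number of occurrences of \<open>z\<^sup>\<top>\<close>; hence variants of SN terms are SN. For \<open>\<R>\<^sub>1 \<rightarrow> \<R>\<^sub>2\<close> one applies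
  \<open>t\<close> to the reduct \<open>u[z\<^sup>\<top> := *\<^sup>\<top>]\<close> of \<open>u\<close>, whose variant reduces back to \<open>u\<close>.\<close>

section \<open>Type-level de Bruijn lemmas\<close>

lemma wfty_mono: "wfty n T \<Longrightarrow> n \<le> m \<Longrightarrow> wfty m T"
  by (induction T arbitrary: n m) auto

lemma tshift_closed: "wfty n T \<Longrightarrow> n \<le> k \<Longrightarrow> tshift k T = T"
  by (induction T arbitrary: n k) auto

lemma tsubst_closed: "wfty n T \<Longrightarrow> n \<le> k \<Longrightarrow> tsubst k A T = T"
  by (induction T arbitrary: n k A) auto

lemma wfty_tshift: "wfty n T \<Longrightarrow> wfty (Suc n) (tshift k T)"
  by (induction T arbitrary: n k) auto

lemma wfty_tshift_inv: "wfty (Suc n) (tshift k T) \<Longrightarrow> k \<le> n \<Longrightarrow> wfty n T"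
  by (induction T arbitrary: n k) (auto split: if_splits)

lemma wfty_tsubst: "wfty (Suc n) B \<Longrightarrow> k \<le> n \<Longrightarrow> wfty n A \<Longrightarrow> wfty n (tsubst k A B)"
proof (induction B arbitrary: n k A)
  case (All B)
  then show ?case using All.IH[of "Suc n" "Suc k" "tshift 0 A"] wfty_tshift[of n A 0] by simp
qed auto

lemma tshift_inj: "tshift k A = tshift k B \<Longrightarrow> A = B"
  by (induction A arbitrary: k B; case_tac B; auto split: if_splits)

lemma tshift_tshift: "j \<le> m \<Longrightarrow> tshift (Suc m) (tshift j A) = tshift j (tshift m A)"
  by (induction A arbitrary: j m) auto

lemma map_tshift_tshift: "map (tshift 0) (map (tshift k) G) = map (tshift (Suc k)) (map (tshift 0) G)"
  by (induction G) (simp_all add: tshift_tshift)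

lemma tsubst_tshift_same: "tsubst k A (tshift k C) = C"
  by (induction C arbitrary: k A) auto

lemma tsubst_TBnd_tshift: "tsubst k (TBnd k) (tshift (Suc k) D) = D"
  by (induction D arbitrary: k) auto

lemma tshift_tsubst:
  "tshift (j + k) (tsubst j A B) = tsubst j (tshift (j + k) A) (tshift (Suc (j + k)) B)"
proof (induction B arbitrary: j A)
  case (All B)
  then show ?case using tshift_tshift[of 0 "j + k" A] by (simp add: add_Suc[symmetric] del: add_Suc)
qed auto

lemma tsubst_tshift_comm: "j \<le> k \<Longrightarrow> tsubst (Suc k) (tshift j A) (tshift j C) = tshift j (tsubst k A C)"
proof (induction C arbitrary: j k A)
  case (All C)
  then show ?case using All.IH[of "Suc j" "Suc k" "tshift 0 A"] tshift_tshift[of 0 j A] by simp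
qed auto

lemma tsubst_tsubst:
  "tsubst (j + k) A (tsubst j C D) = tsubst j (tsubst (j + k) A C) (tsubst (Suc (j + k)) (tshift j A) D)"
proof (induction D arbitrary: j A C)
  case (TBnd i)
  then show ?case by (auto simp: tsubst_tshift_same)
next
  case (All D)
  then show ?case using tshift_tshift[of 0 j A] tsubst_tshift_comm[of 0 "j + k" A C]
    by (simp add: add_Suc[symmetric] del: add_Suc)
qed auto

lemma tshift_eq_Arr: "tshift k U = Arr X Y \<longleftrightarrow> (\<exists>X' Y'. U = Arr X' Y' \<and> X = tshift k X' \<and> Y = tshift k Y')"
  by (cases U) auto

lemma tshift_eq_Prod: "tshift k U = Prod X Y \<longleftrightarrow> (\<exists>X' Y'. U = Prod X' Y' \<and> X = tshift k X' \<and> Y = tshift k Y')"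
  by (cases U) auto

lemma tshift_eq_All: "tshift k U = All X \<longleftrightarrow> (\<exists>X'. U = All X' \<and> X = tshift (Suc k) X')"
  by (cases U) auto

section \<open>Typing and subject reduction\<close>

inductive_cases typing_StarE: "typing n G Star T"
inductive_cases typing_FVarE: "typing n G (FVar x S) T"
inductive_cases typing_BVarE: "typing n G (BVar i) T"
inductive_cases typing_LamE: "typing n G (Lam A b) T"
inductive_cases typing_AppE: "typing n G (App u v) T"
inductive_cases typing_PairE: "typing n G (Pair u v) T"
inductive_cases typing_Pi1E: "typing n G (Pi1 u) T"
inductive_cases typing_Pi2E: "typing n G (Pi2 u) T"
inductive_cases typing_TLamE: "typing n G (TLam b) T"
inductive_cases typing_TAppE: "typing n G (TApp u A) T"

lemmas typing_elims = typing_StarE typing_FVarE typing_BVarE typing_LamE typing_AppE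
  typing_PairE typing_Pi1E typing_Pi2E typing_TLamE typing_TAppE

lemma typing_unique: "typing n G t T \<Longrightarrow> typing n G t T' \<Longrightarrow> T = T'"
  by (induction t arbitrary: n G T T') (fastforce elim!: typing_elims)+

lemma typing_wfty: "typing n G t T \<Longrightarrow> \<forall>C\<in>set G. wfty n C \<Longrightarrow> wfty n T"
proof (induction rule: typing.induct)
  case (T_FVar T n G x) then show ?case using wfty_mono by blast
next
  case (T_TLam n G b B) then show ?case using wfty_tshift by auto
next
  case (T_TApp n G u B A) then show ?case using wfty_tsubst by auto
qed auto

lemma typing_lift:
  "typing n G s A \<Longrightarrow> k \<le> length G \<Longrightarrow> typing n (take k G @ C # drop k G) (lift k s) A"
proof (induction arbitrary: k C rule: typing.induct)
  case (T_BVar i G n)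
  show ?case
  proof (cases "i < k")
    case True
    then show ?thesis using T_BVar typing.T_BVar[of i "take k G @ C # drop k G" n] by (simp add: nth_append)
  next
    case False
    then have "(take k G @ C # drop k G) ! Suc i = G ! i"
      using T_BVar by (simp add: nth_append Suc_diff_le min_def)
    then show ?thesis using False T_BVar typing.T_BVar[of "Suc i" "take k G @ C # drop k G" n] by simp
  qed
next
  case (T_Lam n A G b B)
  then show ?case using T_Lam.IH[of "Suc k" C] by (auto intro: typing.T_Lam)
next
  case (T_TLam n G b B)
  then show ?case using T_TLam.IH[of k "tshift 0 C"] by (auto intro: typing.T_TLam simp: take_map drop_map)
qed (fastforce intro: typing.intros)+

lemma typing_ttshift:
  "typing n G s A \<Longrightarrow> k \<le> n \<Longrightarrow> typing (Suc n) (map (tshift k) G) (ttshift k s) (tshift k A)"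
proof (induction arbitrary: k rule: typing.induct)
  case (T_FVar T n G x)
  then show ?case using tshift_closed[of 0 T k] by (auto intro: typing.T_FVar)
next
  case (T_BVar i G n)
  then show ?case using typing.T_BVar[of i "map (tshift k) G" "Suc n"] by simp
next
  case (T_Lam n A G b B)
  then show ?case by (auto intro!: typing.T_Lam wfty_tshift)
next
  case (T_TLam n G b B)
  have "typing (Suc (Suc n)) (map (tshift (Suc k)) (map (tshift 0) G)) (ttshift (Suc k) b) (tshift (Suc k) B)"
    using T_TLam.IH[of "Suc k"] T_TLam.prems by simp
  then have "typing (Suc (Suc n)) (map (tshift 0) (map (tshift k) G)) (ttshift (Suc k) b) (tshift (Suc k) B)"
    unfolding map_tshift_tshift .
  then show ?case by (simp add: typing.T_TLam)
next
  case (T_TApp n G u B A)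
  then show ?case using tshift_tsubst[of 0 k A B] by (auto intro!: typing.T_TApp wfty_tshift)
qed (fastforce intro: typing.intros)+

lemma typing_subst:
  assumes "typing n G b B" and "k < length G" and "typing n (take k G @ drop (Suc k) G) s (G ! k)"
  shows "typing n (take k G @ drop (Suc k) G) (subst k s b) B"
  using assms
proof (induction arbitrary: k s rule: typing.induct)
  case (T_BVar i G n)
  then show ?case
    using typing.T_BVar[of i "take k G @ drop (Suc k) G" n] typing.T_BVar[of "i - 1" "take k G @ drop (Suc k) G" n]
    by (cases i) (auto simp: nth_append min_def)
next
  case (T_Lam n A G b B)
  have "typing n (A # take k G @ drop (Suc k) G) (lift 0 s) (G ! k)"
    using typing_lift[OF T_Lam.prems(2), of 0 A] by simp
  then show ?case using T_Lam.IH[of "Suc k" "lift 0 s"] T_Lam.prems T_Lam.hyps by (auto intro!: typing.T_Lam)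
next
  case (T_TLam n G b B)
  have "typing (Suc n) (map (tshift 0) (take k G @ drop (Suc k) G)) (ttshift 0 s) (tshift 0 (G ! k))"
    using typing_ttshift T_TLam.prems by blast
  then show ?case using T_TLam.IH[of k "ttshift 0 s"] T_TLam.prems
    by (auto intro!: typing.T_TLam simp: take_map drop_map)
qed (fastforce intro: typing.intros)+

lemma typing_ttsubst:
  "typing (Suc n) G t B \<Longrightarrow> k \<le> n \<Longrightarrow> wfty n A \<Longrightarrow>
   typing n (map (tsubst k A) G) (ttsubst k A t) (tsubst k A B)"
proof (induction "Suc n" G t B arbitrary: n k A rule: typing.induct)
  case (T_FVar T G x)
  then show ?case using tsubst_closed[of 0 T k A] by (auto intro: typing.T_FVar)
next
  case (T_BVar i G)
  then show ?case using typing.T_BVar[of i "map (tsubst k A) G" n] by simp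
next
  case (T_Lam C G b B)
  then show ?case by (auto intro!: typing.T_Lam wfty_tsubst)
next
  case (T_TLam G b B)
  have eq: "map (tsubst (Suc k) (tshift 0 A)) (map (tshift 0) G) = map (tshift 0) (map (tsubst k A) G)"
    by (induction G) (simp_all add: tsubst_tshift_comm[of 0 k A, simplified])
  have "typing (Suc n) (map (tsubst (Suc k) (tshift 0 A)) (map (tshift 0) G))
      (ttsubst (Suc k) (tshift 0 A) b) (tsubst (Suc k) (tshift 0 A) B)"
    using T_TLam.hyps(2) T_TLam.prems wfty_tshift by blast
  then show ?case unfolding eq by (simp add: typing.T_TLam)
next
  case (T_TApp G u D C)
  have "tsubst k A (tsubst 0 C D) = tsubst 0 (tsubst k A C) (tsubst (Suc k) (tshift 0 A) D)"
    using tsubst_tsubst[of 0 k A C D] by simp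
  moreover have "wfty n (tsubst k A C)" using T_TApp wfty_tsubst by blast
  ultimately show ?case using T_TApp by (auto intro!: typing.T_TApp)
qed (fastforce intro: typing.intros)+

lemma typing_lift_inv:
  "typing n (take k G @ C # drop k G) (lift k t) B \<Longrightarrow> k \<le> length G \<Longrightarrow> typing n G t B"
proof (induction t arbitrary: n G k B C)
  case (BVar i)
  show ?case
  proof (cases "i < k")
    case True
    then show ?thesis using BVar by (auto elim!: typing_BVarE intro!: typing.T_BVar simp: nth_append)
  next
    case False
    with BVar.prems have "Suc i < Suc (length G)" "B = (take k G @ C # drop k G) ! Suc i"
      by (auto elim!: typing_BVarE)
    then show ?thesis using False BVar.prems(2) typing.T_BVar[of i G n] by (simp add: nth_append Suc_diff_le)
  qed
next
  case (Lam A b)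
  from Lam.prems(1) obtain B' where "B = Arr A B'" "wfty n A"
    and "typing n (take (Suc k) (A # G) @ C # drop (Suc k) (A # G)) (lift (Suc k) b) B'"
    by (auto elim: typing_LamE)
  then show ?case using Lam.IH Lam.prems(2) by (fastforce intro: typing.T_Lam)
next
  case (TLam b)
  from TLam.prems(1) obtain B' where "B = All B'"
    and "typing (Suc n) (take k (map (tshift 0) G) @ tshift 0 C # drop k (map (tshift 0) G)) (lift k b) B'"
    by (auto elim: typing_TLamE simp: take_map drop_map)
  then show ?case using TLam.IH TLam.prems(2) by (fastforce intro: typing.T_TLam)
qed (fastforce elim!: typing_elims intro: typing.intros)+

lemma typing_ttshift_inv:
  "typing (Suc n) (map (tshift k) G) (ttshift k s) C \<Longrightarrow> k \<le> n \<Longrightarrow> \<exists>C'. C = tshift k C' \<and> typing n G s C'"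
proof (induction s arbitrary: n k G C)
  case Star
  then show ?case by (auto elim!: typing_StarE intro!: exI[of _ Top] typing.T_Star)
next
  case (FVar x T)
  then show ?case using tshift_closed[of 0 T k] by (auto elim!: typing_FVarE intro!: exI[of _ T] typing.T_FVar)
next
  case (BVar i)
  then show ?case by (auto elim!: typing_BVarE intro!: typing.T_BVar)
next
  case (Lam A b)
  from Lam.prems(1) obtain D where C: "C = Arr (tshift k A) D" "wfty (Suc n) (tshift k A)"
    and "typing (Suc n) (map (tshift k) (A # G)) (ttshift k b) D"
    by (auto elim: typing_LamE)
  with Lam.IH Lam.prems(2) obtain D' where "D = tshift k D'" "typing n (A # G) b D'" by blast
  moreover have "wfty n A" using C(2) Lam.prems(2) wfty_tshift_inv by blast
  ultimately show ?case using C by (auto intro!: exI[of _ "Arr A D'"] typing.T_Lam)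
next
  case (App u v)
  from App.prems(1) obtain X where
    "typing (Suc n) (map (tshift k) G) (ttshift k u) (Arr X C)"
    "typing (Suc n) (map (tshift k) G) (ttshift k v) X"
    by (auto elim: typing_AppE)
  with App.IH App.prems(2) obtain U V where
    "Arr X C = tshift k U" "typing n G u U" "X = tshift k V" "typing n G v V"
    by meson
  then show ?case by (metis tshift_eq_Arr tshift_inj typing.T_App)
next
  case (Pair u v)
  from Pair.prems(1) obtain X Y where "C = Prod X Y"
    "typing (Suc n) (map (tshift k) G) (ttshift k u) X" "typing (Suc n) (map (tshift k) G) (ttshift k v) Y"
    by (auto elim: typing_PairE)
  with Pair.IH Pair.prems(2) show ?case by (metis tshift.simps(4) typing.T_Pair)
next
  case (Pi1 u)
  from Pi1.prems(1) obtain Y where "typing (Suc n) (map (tshift k) G) (ttshift k u) (Prod C Y)"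
    by (auto elim: typing_Pi1E)
  with Pi1.IH Pi1.prems(2) show ?case by (metis tshift_eq_Prod typing.T_Pi1)
next
  case (Pi2 u)
  from Pi2.prems(1) obtain Y where "typing (Suc n) (map (tshift k) G) (ttshift k u) (Prod Y C)"
    by (auto elim: typing_Pi2E)
  with Pi2.IH Pi2.prems(2) show ?case by (metis tshift_eq_Prod typing.T_Pi2)
next
  case (TLam b)
  from TLam.prems(1) obtain D where C: "C = All D"
    and tb: "typing (Suc (Suc n)) (map (tshift 0) (map (tshift k) G)) (ttshift (Suc k) b) D"
    by (auto elim: typing_TLamE)
  from tb have "typing (Suc (Suc n)) (map (tshift (Suc k)) (map (tshift 0) G)) (ttshift (Suc k) b) D"
    unfolding map_tshift_tshift .
  with TLam.IH TLam.prems(2) obtain D' where "D = tshift (Suc k) D'" "typing (Suc n) (map (tshift 0) G) b D'"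
    by (meson Suc_le_mono)
  then show ?case using C by (auto intro!: exI[of _ "All D'"] typing.T_TLam)
next
  case (TApp u A)
  from TApp.prems(1) obtain D where C: "C = tsubst 0 (tshift k A) D" and wf: "wfty (Suc n) (tshift k A)"
    and "typing (Suc n) (map (tshift k) G) (ttshift k u) (All D)"
    by (auto elim: typing_TAppE)
  with TApp.IH TApp.prems(2) obtain D' where "D = tshift (Suc k) D'" "typing n G u (All D')"
    by (metis tshift_eq_All)
  moreover have "C = tshift k (tsubst 0 A D')" using C calculation(1) tshift_tsubst[of 0 k A D'] by simp
  moreover have "wfty n A" using wf TApp.prems(2) wfty_tshift_inv by blast
  ultimately show ?case by (auto intro!: typing.T_TApp)
qed

lemma typing_eta_body:
  assumes "typing n (A # G) (App (lift 0 t) s) B" and "typing n (A # G) s A"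
  shows "typing n G t (Arr A B)"
proof -
  from assms(1) obtain X where "typing n (A # G) (lift 0 t) (Arr X B)" "typing n (A # G) s X"
    by (auto elim: typing_AppE)
  with assms(2) have "typing n (take 0 G @ A # drop 0 G) (lift 0 t) (Arr A B)"
    using typing_unique by fastforce
  then show ?thesis using typing_lift_inv by blast
qed

lemma star_neq [simp]: "star T \<noteq> App u v" "star T \<noteq> Pi1 u" "star T \<noteq> Pi2 u" "star T \<noteq> TApp u A"
  by (cases T; simp)+

lemma typing_star: "iso T \<Longrightarrow> wfty n T \<Longrightarrow> typing n G (star T) T"
  by (induction arbitrary: n G rule: iso.induct) (auto intro: typing.intros)

lemma typing_star_unique: "iso T \<Longrightarrow> typing n G (star T) T' \<Longrightarrow> T' = T"
  by (induction arbitrary: n G T' rule: iso.induct) (auto elim!: typing_elims)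

inductive_cases red_StarE: "red n G Star s"
inductive_cases red_FVarE: "red n G (FVar x T) s"
inductive_cases red_LamE: "red n G (Lam A b) s"
inductive_cases red_AppE: "red n G (App u v) s"
inductive_cases red_PairE: "red n G (Pair u v) s"
inductive_cases red_Pi1E: "red n G (Pi1 u) s"
inductive_cases red_Pi2E: "red n G (Pi2 u) s"
inductive_cases red_TLamE: "red n G (TLam b) s"

lemma star_normal: "iso T \<Longrightarrow> \<not> red n G (star T) s"
proof (induction arbitrary: n G s rule: iso.induct)
  case iso_Top
  show ?case
  proof
    assume "red n G (star Top) s"
    then show False by (cases rule: red_StarE) (auto elim: typing_StarE)
  qed
next
  case (iso_Arr T A)
  then show ?case
    by (auto elim!: red_LamE dest: typing_star_unique[OF iso.iso_Arr[OF iso_Arr.hyps], simplified])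
next
  case (iso_All T)
  then show ?case
    by (auto elim!: red_TLamE dest: typing_star_unique[OF iso.iso_All[OF iso_All.hyps], simplified])
next
  case (iso_Prod A B)
  then show ?case
    by (auto elim!: red_PairE dest: typing_star_unique[OF iso.iso_Prod[OF iso_Prod.hyps], simplified])
qed

lemma subject_reduction:
  "red n G t s \<Longrightarrow> typing n G t T \<Longrightarrow> \<forall>C\<in>set G. wfty n C \<Longrightarrow> typing n G s T"
proof (induction arbitrary: T rule: red.induct)
  case (r_beta n G A u v)
  then show ?case using typing_subst[of n "A # G" u T 0 v] by (auto elim!: typing_AppE typing_LamE)
next
  case (r_eta n G A t)
  then show ?case
    using typing_eta_body[OF _ typing.T_BVar[of 0 "A # G" n, simplified]] by (auto elim!: typing_LamE)
next
  case (r_SP n G u)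
  then show ?case by (auto elim!: typing_PairE typing_Pi1E typing_Pi2E dest: typing_unique)
next
  case (r_gentop n G u T')
  then show ?case using typing_unique typing_wfty typing_star by metis
next
  case (r_eta_top A n G t)
  then show ?case by (auto elim!: typing_LamE intro: typing_eta_body typing_star)
next
  case (r_pair_top1 n G u A T')
  then show ?case by (auto elim!: typing_PairE typing_Pi1E dest: typing_unique typing_star_unique)
next
  case (r_pair_top2 n G u T' B)
  then show ?case by (auto elim!: typing_PairE typing_Pi2E dest: typing_unique typing_star_unique)
next
  case (r_beta2 n G t A)
  then obtain B where "T = tsubst 0 A B" "wfty n A" "typing (Suc n) (map (tshift 0) G) t B"
    by (auto elim!: typing_TAppE typing_TLamE)
  moreover have "map (tsubst 0 A) (map (tshift 0) G) = G"
    by (induction G) (simp_all add: tsubst_tshift_same)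
  ultimately show ?case using typing_ttsubst[of n "map (tshift 0) G" t B 0 A] by simp
next
  case (r_eta2 n G s)
  then obtain D where "T = All (tsubst 0 (TBnd 0) D)"
    and "typing (Suc n) (map (tshift 0) G) (ttshift 0 s) (All D)"
    by (auto elim!: typing_TLamE typing_TAppE)
  moreover obtain D' where "D = tshift (Suc 0) D'" "typing n G s (All D')"
    using typing_ttshift_inv[of n 0 G s "All D"] calculation(2) by (auto simp: tshift_eq_All eq_commute[of "All D"])
  ultimately show ?case using tsubst_TBnd_tshift[of 0 D'] by simp
next
  case (c_TLam n G b b')
  then show ?case by (auto elim!: typing_TLamE intro!: typing.T_TLam simp: wfty_tshift)
qed (fastforce elim!: typing_elims intro: typing.intros)+

lemma has_type_step: "has_type t T \<Longrightarrow> step t t' \<Longrightarrow> has_type t' T"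
  unfolding has_type_def step_def using subject_reduction[of 0 "[]" t t' T] by simp

lemma step_congs:
  "step t t' \<Longrightarrow> step (App t u) (App t' u)"
  "step t t' \<Longrightarrow> step (Pi1 t) (Pi1 t')"
  "step t t' \<Longrightarrow> step (Pi2 t) (Pi2 t')"
  by (simp_all add: step_def red.c_AppL red.c_Pi1 red.c_Pi2)

lemma step_FVarD: "step (FVar x T) s \<Longrightarrow> s = star T \<and> iso T"
  by (auto simp: step_def elim!: red_FVarE typing_FVarE)

lemma step_Pi1_cases:
  assumes "step (Pi1 u) s" and "has_type (Pi1 u) A"
  shows "(\<exists>b. u = Pair s b) \<or> s = star A \<and> iso A \<or> (\<exists>u'. s = Pi1 u' \<and> step u u')"
  using assms by (auto simp: step_def has_type_def elim!: red_Pi1E dest: typing_unique)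

lemma step_Pi2_cases:
  assumes "step (Pi2 u) s" and "has_type (Pi2 u) B"
  shows "(\<exists>a. u = Pair a s) \<or> s = star B \<and> iso B \<or> (\<exists>u'. s = Pi2 u' \<and> step u u')"
  using assms by (auto simp: step_def has_type_def elim!: red_Pi2E dest: typing_unique)

lemma step_App_cases:
  assumes "step (App t u) s" and "has_type (App t u) B"
  shows "(\<exists>A b. t = Lam A b \<and> s = subst 0 u b) \<or> s = star B \<and> iso B \<or>
    (\<exists>t'. s = App t' u \<and> step t t') \<or> (\<exists>u'. s = App t u' \<and> step u u')"
  using assms by (auto simp: step_def has_type_def elim!: red_AppE dest: typing_unique)

section \<open>Strong normalisation\<close>

lemma SN_step: "SN t \<Longrightarrow> step t t' \<Longrightarrow> SN t'"
  unfolding SN_def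
proof (elim contrapos_nn exE conjE)
  fix f assume "step t t'" "f 0 = t'" "\<forall>i. step (f i) (f (Suc i))"
  then show "\<exists>g. g 0 = t \<and> (\<forall>i. step (g i) (g (Suc i)))"
    by (intro exI[of _ "case_nat t f"]) (auto split: nat.split)
qed

lemma SN_intro:
  assumes "\<And>t'. step t t' \<Longrightarrow> SN t'"
  shows "SN t"
  unfolding SN_def
proof (intro notI, elim exE conjE)
  fix f assume f: "f 0 = t" "\<forall>i. step (f i) (f (Suc i))"
  then have "\<not> SN (f (Suc 0))" unfolding SN_def by (auto intro!: exI[of _ "f \<circ> Suc"])
  moreover have "step t (f (Suc 0))" using f by metis
  ultimately show False using assms by blast
qed

lemma SN_induct [consumes 1, case_names step]:
  assumes "SN t" and step: "\<And>t. SN t \<Longrightarrow> (\<And>t'. step t t' \<Longrightarrow> P t') \<Longrightarrow> P t"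
  shows "P t"
proof (rule ccontr)
  assume "\<not> P t"
  define Bad where "Bad x \<longleftrightarrow> SN x \<and> \<not> P x" for x
  have "\<exists>y. Bad y \<and> step x y" if "Bad x" for x
    using that step SN_step unfolding Bad_def by blast
  moreover have "Bad t" using \<open>SN t\<close> \<open>\<not> P t\<close> by (simp add: Bad_def)
  ultimately have "\<exists>f. \<forall>i. (Bad (f i) \<and> (i = 0 \<longrightarrow> f i = t)) \<and> step (f i) (f (Suc i))"
    by (intro dependent_nat_choice) auto
  with \<open>SN t\<close> show False unfolding SN_def by blast
qed

lemma SN_context:
  assumes "\<And>x y. step x y \<Longrightarrow> step (C x) (C y)" and "SN (C t)"
  shows "SN t"
  using assms(2) unfolding SN_def
proof (elim contrapos_nn exE conjE)
  fix f assume "f 0 = t" "\<forall>i. step (f i) (f (Suc i))"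
  then show "\<exists>g. g 0 = C t \<and> (\<forall>i. step (g i) (g (Suc i)))"
    using assms(1) by (intro exI[of _ "C \<circ> f"]) simp
qed

lemma SN_AppD: "SN (App t u) \<Longrightarrow> SN t"
  by (rule SN_context[of "\<lambda>x. App x u"]) (rule step_congs)

lemma SN_Pi1D: "SN (Pi1 t) \<Longrightarrow> SN t"
  by (rule SN_context[of Pi1]) (rule step_congs)

section \<open>Variants\<close>

fun var_to_star :: "nat \<Rightarrow> trm \<Rightarrow> trm" where
  "var_to_star z Star = Star"
| "var_to_star z (FVar x T) = (if x = z \<and> T = Top then Star else FVar x T)"
| "var_to_star z (BVar i) = BVar i"
| "var_to_star z (Lam A b) = Lam A (var_to_star z b)"
| "var_to_star z (App u v) = App (var_to_star z u) (var_to_star z v)"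
| "var_to_star z (Pair u v) = Pair (var_to_star z u) (var_to_star z v)"
| "var_to_star z (Pi1 u) = Pi1 (var_to_star z u)"
| "var_to_star z (Pi2 u) = Pi2 (var_to_star z u)"
| "var_to_star z (TLam b) = TLam (var_to_star z b)"
| "var_to_star z (TApp u A) = TApp (var_to_star z u) A"

fun var_count :: "nat \<Rightarrow> trm \<Rightarrow> nat" where
  "var_count z Star = 0"
| "var_count z (FVar x T) = (if x = z \<and> T = Top then 1 else 0)"
| "var_count z (BVar i) = 0"
| "var_count z (Lam A b) = var_count z b"
| "var_count z (App u v) = var_count z u + var_count z v"
| "var_count z (Pair u v) = var_count z u + var_count z v"
| "var_count z (Pi1 u) = var_count z u"
| "var_count z (Pi2 u) = var_count z u"
| "var_count z (TLam b) = var_count z b"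
| "var_count z (TApp u A) = var_count z u"

lemma var_to_star_lift [simp]: "var_to_star z (lift k t) = lift k (var_to_star z t)"
  by (induction t arbitrary: k) auto

lemma var_to_star_ttshift [simp]: "var_to_star z (ttshift k t) = ttshift k (var_to_star z t)"
  by (induction t arbitrary: k) auto

lemma var_to_star_subst [simp]: "var_to_star z (subst k s t) = subst k (var_to_star z s) (var_to_star z t)"
  by (induction t arbitrary: k s) auto

lemma var_to_star_ttsubst [simp]: "var_to_star z (ttsubst k A t) = ttsubst k A (var_to_star z t)"
  by (induction t arbitrary: k A) auto

lemma var_to_star_star [simp]: "var_to_star z (star T) = star T"
  by (induction T) auto

lemma var_count_star [simp]: "var_count z (star T) = 0"
  by (induction T) auto

lemma var_to_star_no_var: "var_count z t = 0 \<Longrightarrow> var_to_star z t = t"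
  by (induction t) auto

lemma fvs_var_to_star: "(z, Top) \<notin> fvs (var_to_star z t)"
  by (induction t) auto

lemma var_to_star_repl_star: "(z, Top) \<notin> fvs t \<Longrightarrow> var_to_star z (repl_star z t) = t"
  by (induction t) auto

lemma typing_var_to_star: "typing n G t T \<Longrightarrow> typing n G (var_to_star z t) T"
  by (induction rule: typing.induct) (auto intro: typing.intros)

lemma typing_repl_star: "typing n G t T \<Longrightarrow> typing n G (repl_star z t) T"
  by (induction rule: typing.induct) (auto intro: typing.intros)

text \<open>The second alternative covers the gentop steps \<open>z\<^sup>\<top> \<rightarrow> *\<^sup>\<top>\<close>.\<close>

lemma red_var_to_star:
  "red n G t s \<Longrightarrow>
   red n G (var_to_star z t) (var_to_star z s) \<or> var_to_star z t = var_to_star z s \<and> var_count z s < var_count z t"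
proof (induction rule: red.induct)
  case (r_gentop n G u T)
  show ?case
  proof (cases "var_to_star z u = star T")
    case True
    then have "var_count z u \<noteq> 0" using r_gentop.hyps(3) var_to_star_no_var by metis
    then show ?thesis using True by simp
  next
    case False
    then show ?thesis using r_gentop typing_var_to_star red.r_gentop by fastforce
  qed
next
  case (r_eta_top A n G t)
  then show ?case using red.r_eta_top[OF r_eta_top.hyps, of n G "var_to_star z t"] by simp
next
  case (r_pair_top1 n G u A T)
  then show ?case using red.r_pair_top1[OF typing_var_to_star[OF r_pair_top1.hyps(1)] r_pair_top1.hyps(2)] by simp
next
  case (r_pair_top2 n G u T B)
  then show ?case using red.r_pair_top2[OF typing_var_to_star[OF r_pair_top2.hyps(1)] r_pair_top2.hyps(2)] by simp
qed (auto intro: red.intros)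

lemma SN_var_to_star_inv:
  assumes "SN (var_to_star z t)"
  shows "SN t"
proof -
  have "SN t" if "SN s" "var_to_star z t = s" for s t
    using that
  proof (induction arbitrary: t rule: SN_induct)
    case (step s)
    then show ?case
    proof (induction "var_count z t" arbitrary: t rule: less_induct)
      case less
      show ?case
      proof (rule SN_intro)
        fix t' assume "step t t'"
        then show "SN t'"
          using red_var_to_star[of 0 "[]" t t' z] less step.IH by (auto simp: step_def)
      qed
    qed
  qed
  then show ?thesis using assms by blast
qed

lemma SN_repl_star: "SN t \<Longrightarrow> (z, Top) \<notin> fvs t \<Longrightarrow> SN (repl_star z t)"
  using SN_var_to_star_inv[of z "repl_star z t"] var_to_star_repl_star by simp

lemma reds_congs:
  "(red n (A # G))\<^sup>*\<^sup>* b b' \<Longrightarrow> (red n G)\<^sup>*\<^sup>* (Lam A b) (Lam A b')"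
  "(red n G)\<^sup>*\<^sup>* u u' \<Longrightarrow> (red n G)\<^sup>*\<^sup>* (App u v) (App u' v)"
  "(red n G)\<^sup>*\<^sup>* v v' \<Longrightarrow> (red n G)\<^sup>*\<^sup>* (App u v) (App u v')"
  "(red n G)\<^sup>*\<^sup>* u u' \<Longrightarrow> (red n G)\<^sup>*\<^sup>* (Pair u v) (Pair u' v)"
  "(red n G)\<^sup>*\<^sup>* v v' \<Longrightarrow> (red n G)\<^sup>*\<^sup>* (Pair u v) (Pair u v')"
  "(red n G)\<^sup>*\<^sup>* u u' \<Longrightarrow> (red n G)\<^sup>*\<^sup>* (Pi1 u) (Pi1 u')"
  "(red n G)\<^sup>*\<^sup>* u u' \<Longrightarrow> (red n G)\<^sup>*\<^sup>* (Pi2 u) (Pi2 u')"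
  "(red (Suc n) (map (tshift 0) G))\<^sup>*\<^sup>* b b' \<Longrightarrow> (red n G)\<^sup>*\<^sup>* (TLam b) (TLam b')"
  "(red n G)\<^sup>*\<^sup>* u u' \<Longrightarrow> (red n G)\<^sup>*\<^sup>* (TApp u A) (TApp u' A)"
  by (induction rule: rtranclp_induct; auto intro: rtranclp.rtrancl_into_rtrancl red.intros)+

lemma red_FVar_Top_Star: "red n G (FVar z Top) Star"
  using red.r_gentop[OF typing.T_FVar iso.iso_Top] by simp

lemma reds_var_to_star: "(red n G)\<^sup>*\<^sup>* t (var_to_star z t)"
proof (induction t arbitrary: n G)
  case (App u v)
  then show ?case
    using reds_congs(2,3) by (metis rtranclp_trans var_to_star.simps(5))
next
  case (Pair u v)
  then show ?case
    using reds_congs(4,5) by (metis rtranclp_trans var_to_star.simps(6))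
qed (auto intro: red_FVar_Top_Star reds_congs(1,6-9))

lemma reds_repl_star_var_to_star: "(red n G)\<^sup>*\<^sup>* (repl_star z (var_to_star z t)) t"
proof (induction t arbitrary: n G)
  case (App u v)
  then show ?case
    using reds_congs(2,3)
    by (metis rtranclp_trans var_to_star.simps(5) repl_star.simps(5))
next
  case (Pair u v)
  then show ?case
    using reds_congs(4,5)
    by (metis rtranclp_trans var_to_star.simps(6) repl_star.simps(6))
qed (auto intro: red_FVar_Top_Star reds_congs(1,6-9))

section \<open>Reducibility candidates\<close>

lemma RCI:
  assumes "\<And>t. t \<in> R \<Longrightarrow> has_type t T"
    and "iso T \<Longrightarrow> star T \<in> R"
    and "\<And>t z. t \<in> R \<Longrightarrow> (z, Top) \<notin> fvs t \<Longrightarrow> repl_star z t \<in> R"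
    and "\<And>t. t \<in> R \<Longrightarrow> SN t"
    and "\<And>t t'. t \<in> R \<Longrightarrow> step t t' \<Longrightarrow> t' \<in> R"
    and "\<And>t. has_type t T \<Longrightarrow> neutral t \<Longrightarrow> (\<And>t'. step t t' \<Longrightarrow> t' \<in> R) \<Longrightarrow> t \<in> R"
  shows "RC T R"
  using assms unfolding RC_def variant_closed_def by blast

lemma RC_has_type: "RC T R \<Longrightarrow> t \<in> R \<Longrightarrow> has_type t T"
  unfolding RC_def by blast

lemma RC_star: "RC T R \<Longrightarrow> iso T \<Longrightarrow> star T \<in> R"
  unfolding RC_def by blast

lemma RC_repl_star: "RC T R \<Longrightarrow> t \<in> R \<Longrightarrow> (z, Top) \<notin> fvs t \<Longrightarrow> repl_star z t \<in> R"
  unfolding RC_def variant_closed_def by blast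

lemma RC_SN: "RC T R \<Longrightarrow> t \<in> R \<Longrightarrow> SN t"
  unfolding RC_def by blast

lemma RC_step: "RC T R \<Longrightarrow> t \<in> R \<Longrightarrow> step t t' \<Longrightarrow> t' \<in> R"
  unfolding RC_def by blast

lemma RC_steps:
  assumes "RC T R" and "t \<in> R" and "step\<^sup>*\<^sup>* t t'"
  shows "t' \<in> R"
  using assms(3,2) by (induction rule: rtranclp_induct) (auto intro: RC_step[OF assms(1)])

lemma RC_neutral: "RC T R \<Longrightarrow> has_type t T \<Longrightarrow> neutral t \<Longrightarrow> (\<And>t'. step t t' \<Longrightarrow> t' \<in> R) \<Longrightarrow> t \<in> R"
  unfolding RC_def by blast

lemma neutral_simps [simp]: "neutral (App u v)" "neutral (Pi1 u)" "neutral (Pi2 u)" "neutral (FVar x T)"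
  by (auto simp: neutral_def)

lemma RC_FVar:
  assumes "is_type A" and "RC A R"
  shows "FVar x A \<in> R"
  using assms(2) by (rule RC_neutral)
    (use assms in \<open>auto simp: has_type_def is_type_def intro: typing.T_FVar RC_star dest!: step_FVarD\<close>)

lemma RC_SNset: "is_type T \<Longrightarrow> RC T (SNset T)"
proof (rule RCI)
  show "star T \<in> SNset T" if "is_type T" "iso T"
    using that star_normal[of T 0 "[]"] typing_star[of T 0 "[]"]
    by (auto simp: SNset_def has_type_def is_type_def step_def intro: SN_intro)
qed (auto simp: SNset_def has_type_def intro: SN_intro SN_step SN_repl_star typing_repl_star
  has_type_step[unfolded has_type_def])

lemma Pi1_mem_RC:
  assumes R: "RC A R" and t: "has_type t (Prod A B)"
    and pair: "\<And>a b. t = Pair a b \<Longrightarrow> a \<in> R"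
    and reducts: "\<And>t'. step t t' \<Longrightarrow> Pi1 t' \<in> R"
  shows "Pi1 t \<in> R"
proof (rule RC_neutral[OF R])
  show ty: "has_type (Pi1 t) A" using t by (auto simp: has_type_def intro: typing.T_Pi1)
  show "s \<in> R" if "step (Pi1 t) s" for s
    using step_Pi1_cases[OF that ty] pair reducts RC_star[OF R] by blast
qed simp

lemma Pi2_mem_RC:
  assumes R: "RC B R" and t: "has_type t (Prod A B)"
    and pair: "\<And>a b. t = Pair a b \<Longrightarrow> b \<in> R"
    and reducts: "\<And>t'. step t t' \<Longrightarrow> Pi2 t' \<in> R"
  shows "Pi2 t \<in> R"
proof (rule RC_neutral[OF R])
  show ty: "has_type (Pi2 t) B" using t by (auto simp: has_type_def intro: typing.T_Pi2)
  show "s \<in> R" if "step (Pi2 t) s" for s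
    using step_Pi2_cases[OF that ty] pair reducts RC_star[OF R] by blast
qed simp

lemma RC_RC_prod:
  assumes A: "is_type A" and B: "is_type B" and R1: "RC A R1" and R2: "RC B R2"
  shows "RC (Prod A B) (RC_prod A B R1 R2)"
proof (rule RCI)
  show "star (Prod A B) \<in> RC_prod A B R1 R2" if iso: "iso (Prod A B)"
  proof -
    from iso have "iso A" "iso B" by (auto elim: iso.cases)
    moreover have ty: "has_type (star (Prod A B)) (Prod A B)"
      using typing_star[OF iso, of 0 "[]"] A B by (simp add: has_type_def is_type_def del: star.simps)
    moreover have "\<not> step (star (Prod A B)) t'" for t'
      using star_normal[OF iso] by (simp add: step_def)
    ultimately show ?thesis
      using Pi1_mem_RC[OF R1 ty] Pi2_mem_RC[OF R2 ty] RC_star[OF R1] RC_star[OF R2]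
      by (simp add: RC_prod_def)
  qed
  show "repl_star z t \<in> RC_prod A B R1 R2" if "t \<in> RC_prod A B R1 R2" "(z, Top) \<notin> fvs t" for t z
    using that RC_repl_star[OF R1, of "Pi1 t" z] RC_repl_star[OF R2, of "Pi2 t" z] typing_repl_star
    by (simp add: RC_prod_def has_type_def)
  show "SN t" if "t \<in> RC_prod A B R1 R2" for t
    using that RC_SN[OF R1] SN_Pi1D by (auto simp: RC_prod_def)
  show "t' \<in> RC_prod A B R1 R2" if "t \<in> RC_prod A B R1 R2" "step t t'" for t t'
    using that has_type_step RC_step[OF R1, of "Pi1 t"] RC_step[OF R2, of "Pi2 t"] step_congs
    by (auto simp: RC_prod_def)
  show "t \<in> RC_prod A B R1 R2"
    if ty: "has_type t (Prod A B)" and "neutral t" and reducts: "\<And>t'. step t t' \<Longrightarrow> t' \<in> RC_prod A B R1 R2"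
    for t
  proof -
    have "Pi1 t \<in> R1" "Pi2 t \<in> R2"
      using Pi1_mem_RC[OF R1 ty] Pi2_mem_RC[OF R2 ty] \<open>neutral t\<close> reducts
      by (auto simp: neutral_def RC_prod_def)
    with ty show ?thesis by (simp add: RC_prod_def)
  qed
qed (simp add: RC_prod_def)

lemma subst_star [simp]: "subst k s (star T) = star T"
  by (induction T arbitrary: k s) auto

lemma App_mem_RC:
  assumes R1: "RC A R1" and R2: "RC B R2" and t: "has_type t (Arr A B)"
    and beta: "\<And>A' b u. t = Lam A' b \<Longrightarrow> u \<in> R1 \<Longrightarrow> subst 0 u b \<in> R2"
    and reducts: "\<And>t'. step t t' \<Longrightarrow> t' \<in> RC_arr A B R1 R2"
    and u: "u \<in> R1"
  shows "App t u \<in> R2"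
  using RC_SN[OF R1 u] u
proof (induction rule: SN_induct)
  case (step u)
  show ?case
  proof (rule RC_neutral[OF R2])
    show ty: "has_type (App t u) B"
      using t RC_has_type[OF R1 step.prems] by (auto simp: has_type_def intro: typing.T_App)
    show "s \<in> R2" if "step (App t u) s" for s
      using step_App_cases[OF that ty] beta reducts step RC_star[OF R2] RC_step[OF R1]
      by (auto simp: RC_arr_def)
  qed simp
qed

lemma RC_arr_repl_star:
  assumes R1: "RC A R1" and R2: "RC B R2" and t: "t \<in> RC_arr A B R1 R2" and z: "(z, Top) \<notin> fvs t"
  shows "repl_star z t \<in> RC_arr A B R1 R2"
proof -
  have "App (repl_star z t) u \<in> R2" if u: "u \<in> R1" for u
  proof -
    define u0 where "u0 = var_to_star z u"
    have "u0 \<in> R1"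
      using RC_steps[OF R1 u] reds_var_to_star[of 0 "[]" u z] by (simp add: u0_def step_def[abs_def])
    with t have "App t u0 \<in> R2" by (simp add: RC_arr_def)
    moreover have "(z, Top) \<notin> fvs (App t u0)" using z fvs_var_to_star[of z u] by (simp add: u0_def)
    ultimately have "App (repl_star z t) (repl_star z u0) \<in> R2"
      using RC_repl_star[OF R2] by fastforce
    moreover have "step\<^sup>*\<^sup>* (App (repl_star z t) (repl_star z u0)) (App (repl_star z t) u)"
      using reds_congs(3)[OF reds_repl_star_var_to_star] by (simp add: u0_def step_def[abs_def])
    ultimately show ?thesis using RC_steps[OF R2] by blast
  qed
  moreover have "has_type (repl_star z t) (Arr A B)"
    using t typing_repl_star by (simp add: RC_arr_def has_type_def)
  ultimately show ?thesis by (simp add: RC_arr_def)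
qed

lemma RC_RC_arr:
  assumes A: "is_type A" and B: "is_type B" and R1: "RC A R1" and R2: "RC B R2"
  shows "RC (Arr A B) (RC_arr A B R1 R2)"
proof (rule RCI)
  show "star (Arr A B) \<in> RC_arr A B R1 R2" if iso: "iso (Arr A B)"
  proof -
    from iso have "iso B" by (auto elim: iso.cases)
    moreover have ty: "has_type (star (Arr A B)) (Arr A B)"
      using typing_star[OF iso, of 0 "[]"] A B by (simp add: has_type_def is_type_def del: star.simps)
    moreover have "\<not> step (star (Arr A B)) t'" for t'
      using star_normal[OF iso] by (simp add: step_def)
    ultimately show ?thesis
      using App_mem_RC[OF R1 R2 ty] RC_star[OF R2] by (simp add: RC_arr_def)
  qed
  show "repl_star z t \<in> RC_arr A B R1 R2" if "t \<in> RC_arr A B R1 R2" "(z, Top) \<notin> fvs t" for t z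
    using RC_arr_repl_star[OF R1 R2 that] .
  show "SN t" if "t \<in> RC_arr A B R1 R2" for t
    using that RC_FVar[OF A R1] RC_SN[OF R2] SN_AppD by (fastforce simp: RC_arr_def)
  show "t' \<in> RC_arr A B R1 R2" if "t \<in> RC_arr A B R1 R2" "step t t'" for t t'
    using that has_type_step RC_step[OF R2] step_congs(1) by (auto simp: RC_arr_def)
  show "t \<in> RC_arr A B R1 R2"
    if ty: "has_type t (Arr A B)" and "neutral t" and reducts: "\<And>t'. step t t' \<Longrightarrow> t' \<in> RC_arr A B R1 R2"
    for t
    using ty App_mem_RC[OF R1 R2 ty _ reducts] \<open>neutral t\<close> by (auto simp: RC_arr_def neutral_def)
qed (simp add: RC_arr_def)

theorem mainTheorem14:
  shows "(\<forall>T. is_type T \<longrightarrow> RC T (SNset T)) \<and>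
         (\<forall>A B R1 R2. is_type A \<longrightarrow> is_type B \<longrightarrow> RC A R1 \<longrightarrow> RC B R2 \<longrightarrow>
            RC (Prod A B) (RC_prod A B R1 R2) \<and> RC (Arr A B) (RC_arr A B R1 R2))"
  using RC_SNset RC_RC_prod RC_RC_arr by blast

end
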